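(* Let $\{\mathbb{P}_{\boldsymbol{\theta}}:\boldsymbol{\theta}\in\mathbf{\Theta}\}$ be an identifiable parametric model on a measurable space $(\mathcal{X},\mathcal{A})$, with $\mathbf{\Theta}$ a compact subset of $\mathbb{R}^d$, and let $\mathbf{X}_1,\mathbf{X}_2,\ldots$ be i.i.d. with law $\mathbb{P}_{\boldsymbol{\theta}_0}$, $\boldsymbol{\theta}_0\in\mathbf{\Theta}$. Let $\phi$ be a strictly convex function of class $\mathcal{C}^2$ satisfying $\int\big|\phi'\big(\tfrac{\mathrm{d}\mathbb{P}_{\boldsymbol{\theta}}}{\mathrm{d}\mathbb{P}_{\boldsymbol{\alpha}}}\big)\big|\,\mathrm{d}\mathbb{P}_{\boldsymbol{\theta}}<\infty$ for all $\boldsymbol{\alpha}\in\mathbf{\Theta}$, fix an escort parameter $\boldsymbol{\theta}\in\mathbf{\Theta}$, and let $h(\boldsymbol{\theta},\boldsymbol{\alpha},\cdot)$ be the function defined in the context. Let $W_n=(W_{n1},\ldots,W_{nn})$ be bootstrap weights, independent of the data, satisfying conditions W.1–W.5 below, and define the bootstrap dual $\phi$-divergence estimator $$\widehat{\boldsymbol{\alpha}}^{\ast}_{\phi}(\boldsymbol{\theta}):=\arg\sup_{\boldsymbol{\alpha}\in\mathbf{\Theta}}\mathbb{P}_n^{\ast}h(\boldsymbol{\theta},\boldsymbol{\alpha}),\qquad \mathbb{P}_n^{\ast}f:=\frac1n\sum_{i=1}^nW_{ni}f(\mathbf{X}_i).$$ Assume: (A.1) $\mathbb{P}_{\boldsymbol{\theta}_0}h(\boldsymbol{\theta},\boldsymbol{\theta}_0)>\sup_{\boldsymbol{\alpha}\notin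 N(\boldsymbol{\theta}_0)}\mathbb{P}_{\boldsymbol{\theta}_0}h(\boldsymbol{\theta},\boldsymbol{\alpha})$ for every open set $N(\boldsymbol{\theta}_0)\subset\mathbf{\Theta}$ containing $\boldsymbol{\theta}_0$; (A.2) $\sup_{\boldsymbol{\alpha}\in\mathbf{\Theta}}|\mathbb{P}_n^{\ast}h(\boldsymbol{\theta},\boldsymbol{\alpha})-\mathbb{P}_{\boldsymbol{\theta}_0}h(\boldsymbol{\theta},\boldsymbol{\alpha})|\to0$ in outer $\mathbb{P}_{XW}$-probability; (A.3) the matrices $V:=\mathbb{P}_{\boldsymbol{\theta}_0}\frac{\partial}{\partial\boldsymbol{\alpha}}h(\boldsymbol{\theta},\boldsymbol{\theta}_0)\frac{\partial}{\partial\boldsymbol{\alpha}}h(\boldsymbol{\theta},\boldsymbol{\theta}_0)^{\top}$ and $S:=-\mathbb{P}_{\boldsymbol{\theta}_0}\frac{\partial^2}{\partial\boldsymbol{\alpha}^2}h(\boldsymbol{\theta},\boldsymbol{\theta}_0)$ are nonsingular; (A.4) the class $\mathcal{H}_n:=\{\frac{\partial}{\partial\boldsymbol{\alpha}}h(\boldsymbol{\theta},\boldsymbol{\alpha}):\|\boldsymbol{\alpha}-\boldsymbol{\theta}_0\|\le\delta_n\}$ (for the fixed $\delta_n>0$) belongs to $M(\mathbb{P}_{\boldsymbol{\theta}_0})\cap L_2(\mathbb{P}_{\boldsymbol{\theta}_0})$ and is $\mathbb{P}_{\boldsymbol{\theta}_0}$-Donsker; (A.5) the class $\dot{\mathcal{H}}_n:=\{\frac{\partial^2}{\partial\boldsymbol{\alpha}^2}h(\boldsymbol{\theta},\boldsymbol{\alpha}):\|\boldsymbol{\alpha}-\boldsymbol{\theta}_0\|\le\delta_n\}$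 belongs to $M(\mathbb{P}_{\boldsymbol{\theta}_0})\cap L_2(\mathbb{P}_{\boldsymbol{\theta}_0})$ and is $\mathbb{P}_{\boldsymbol{\theta}_0}$-Donsker. Then $\widehat{\boldsymbol{\alpha}}^{\ast}_{\phi}(\boldsymbol{\theta})\to\boldsymbol{\theta}_0$ in $\mathbb{P}_W^{o}$-probability in $\mathbb{P}_{\boldsymbol{\theta}_0}$-probability, i.e. for all $\epsilon,\eta>0$, $\mathbb{P}_{\boldsymbol{\theta}_0}\{P^{o}_{W|X}(\|\widehat{\boldsymbol{\alpha}}^{\ast}_{\phi}(\boldsymbol{\theta})-\boldsymbol{\theta}_0\|>\epsilon)>\eta\}\to0$ as $n\to\infty$.
   Context: The function $h$ is $$h(\boldsymbol{\theta},\boldsymbol{\alpha},\mathbf{x}):=\int\phi'\Big(\frac{\mathrm{d}\mathbb{P}_{\boldsymbol{\theta}}}{\mathrm{d}\mathbb{P}_{\boldsymbol{\alpha}}}\Big)\mathrm{d}\mathbb{P}_{\boldsymbol{\theta}}-\Big[\frac{\mathrm{d}\mathbb{P}_{\boldsymbol{\theta}}(\mathbf{x})}{\mathrm{d}\mathbb{P}_{\boldsymbol{\alpha}}(\mathbf{x})}\phi'\Big(\frac{\mathrm{d}\mathbb{P}_{\boldsymbol{\theta}}(\mathbf{x})}{\mathrm{d}\mathbb{P}_{\boldsymbol{\alpha}}(\mathbf{x})}\Big)-\phi\Big(\frac{\mathrm{d}\mathbb{P}_{\boldsymbol{\theta}}(\mathbf{x})}{\mathrm{d}\mathbb{P}_{\boldsymbol{\alpha}}(\mathbf{x})}\Big)\Big],$$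 and $\mathbb{P}f:=\int f\,\mathrm{d}\mathbb{P}$. The weights $W_{ni}$ live on a probability space $(\mathcal{W},\Omega,\mathbb{P}_W)$; the data are coordinate projections on $(\mathcal{X}^\infty,\mathcal{A}^\infty,\mathbb{P}_{\boldsymbol{\theta}_0}^\infty)$, and the joint law is the product $\mathbb{P}_{XW}=\mathbb{P}_{\boldsymbol{\theta}_0}^\infty\times\mathbb{P}_W$. $P^o_{W|X}$ denotes outer probability with respect to the weights given the data. Weight conditions: W.1 $W_n$ is exchangeable for every $n$ (its law is invariant under permutations of coordinates); W.2 $W_{ni}\ge0$ and $\sum_{i=1}^nW_{ni}=n$; W.3 $\limsup_n\int_0^\infty\sqrt{\mathbb{P}_W(W_{n1}\ge u)}\,du\le C<\infty$; W.4 $\lim_{\lambda\to\infty}\limsup_{n\to\infty}\sup_{t\ge\lambda}t^2\mathbb{P}_W(W_{n1}>t)=0$; W.5 $\frac1n\sum_{i=1}^n(W_{ni}-1)^2\to c^2>0$ in $\mathbb{P}_W$-probability. A class $\mathcal{H}$ is in $M(\mathbb{P}_{\boldsymbol{\theta}_0})$ if it possesses enough measurability for randomization of the empirical measure by i.i.d. multipliers to be possible (e.g. $\mathcal{H}$ countable, or image admissible Suslin). $\delta_n>0$ is a fixed sequence. *)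

theory Defs
  imports "HOL-Probability.Probability"
begin

definition outer_prob :: "'a measure \<Rightarrow> 'a set \<Rightarrow> real" where
  "outer_prob M A = Inf {measure M B | B. B \<in> sets M \<and> A \<inter> space M \<subseteq> B}"

definition outer_exp :: "'a measure \<Rightarrow> ('a \<Rightarrow> real) \<Rightarrow> real" where
  "outer_exp M f = Inf {integral\<^sup>L M g | g. integrable M g \<and> (\<forall>x\<in>space M. f x \<le> g x)}"

definition strict_convex_on :: "real set \<Rightarrow> (real \<Rightarrow> real) \<Rightarrow> bool" where
  "strict_convex_on S f \<longleftrightarrow> convex S \<and>
     (\<forall>x\<in>S. \<forall>y\<in>S. x \<noteq> y \<longrightarrow> (\<forall>t. 0 < t \<and> t < 1 \<longrightarrow>
        f ((1 - t) * x + t * y) < (1 - t) * f x + t * f y))"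

definition C2_on :: "real set \<Rightarrow> (real \<Rightarrow> real) \<Rightarrow> bool" where
  "C2_on S f \<longleftrightarrow> (\<forall>x\<in>S. f differentiable (at x) \<and> deriv f differentiable (at x))
                  \<and> continuous_on S (deriv (deriv f))"

definition linf :: "('x \<Rightarrow> real) set \<Rightarrow> (('x \<Rightarrow> real) \<Rightarrow> real) set" where
  "linf F = {z. (\<exists>B. \<forall>f\<in>F. \<bar>z f\<bar> \<le> B) \<and> (\<forall>f. f \<notin> F \<longrightarrow> z f = 0)}"

definition linf_dist :: "('x \<Rightarrow> real) set \<Rightarrow> (('x \<Rightarrow> real) \<Rightarrow> real) \<Rightarrow> (('x \<Rightarrow> real) \<Rightarrow> real) \<Rightarrow> real" where
  "linf_dist F z z' = (if F = {} then 0 else (SUP f\<in>F. \<bar>z f - z' f\<bar>))"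

definition linf_top :: "('x \<Rightarrow> real) set \<Rightarrow> (('x \<Rightarrow> real) \<Rightarrow> real) topology" where
  "linf_top F = Metric_space.mtopology (linf F) (linf_dist F)"

definition emp_proc :: "'x measure \<Rightarrow> ('x \<Rightarrow> real) set \<Rightarrow> nat \<Rightarrow> (nat \<Rightarrow> 'x) \<Rightarrow> (('x \<Rightarrow> real) \<Rightarrow> real)" where
  "emp_proc P F n x = (\<lambda>f. if f \<in> F then
       sqrt (real n) * ((1 / real n) * (\<Sum>i<n. f (x i)) - integral\<^sup>L P f) else 0)"

text \<open>P-Donsker class (Hoffmann-Joergensen weak convergence of the empirical process
  in \<open>\<ell>^\<infinity>(F)\<close> to a tight Borel measurable limit), for i.i.d. coordinate projections
  on the infinite product.\<close>
definition Donsker :: "'x measure \<Rightarrow> ('x \<Rightarrow> real) set \<Rightarrow> bool" where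
  "Donsker P F \<longleftrightarrow>
     (\<forall>x\<in>space P. \<exists>B. \<forall>f\<in>F. \<bar>f x - integral\<^sup>L P f\<bar> \<le> B) \<and>
     (\<exists>G. prob_space G \<and> space G = linf F \<and>
          sets G = sigma_sets (linf F) {U. openin (linf_top F) U} \<and>
          (\<forall>e>0. \<exists>K. compactin (linf_top F) K \<and> K \<in> sets G \<and> measure G K \<ge> 1 - e) \<and>
          (\<forall>H. continuous_map (linf_top F) euclideanreal H \<and> (\<exists>B. \<forall>z\<in>linf F. \<bar>H z\<bar> \<le> B) \<longrightarrow>
               (\<lambda>n. outer_exp (PiM UNIV (\<lambda>_. P)) (\<lambda>x. H (emp_proc P F n x)))
                 \<longlonglongrightarrow> integral\<^sup>L G H))"

text \<open>P-measurable class (van der Vaart and Wellner, Def. 2.3.3): the class \<open>M(P)\<close>.\<close>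
definition P_measurable_class :: "'x measure \<Rightarrow> ('x \<Rightarrow> real) set \<Rightarrow> bool" where
  "P_measurable_class P F \<longleftrightarrow>
     (\<forall>n (e :: nat \<Rightarrow> real).
        (\<lambda>x. SUP f\<in>F. ereal \<bar>\<Sum>i<n. e i * f (x i)\<bar>)
          \<in> borel_measurable (completion (PiM {..<n} (\<lambda>_. P))))"

definition L2_class :: "'x measure \<Rightarrow> ('x \<Rightarrow> real) set \<Rightarrow> bool" where
  "L2_class P F \<longleftrightarrow> (\<forall>f\<in>F. f \<in> borel_measurable P \<and> integrable P (\<lambda>x. (f x)\<^sup>2))"

definition dratio :: "('p \<Rightarrow> 'x \<Rightarrow> real) \<Rightarrow> 'p \<Rightarrow> 'p \<Rightarrow> 'x \<Rightarrow> real" where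
  "dratio p \<theta> \<alpha> x = p \<theta> x / p \<alpha> x"

definition model :: "'x measure \<Rightarrow> ('p \<Rightarrow> 'x \<Rightarrow> real) \<Rightarrow> 'p \<Rightarrow> 'x measure" where
  "model \<mu> p \<alpha> = density \<mu> (\<lambda>x. ennreal (p \<alpha> x))"

definition hfun :: "(real \<Rightarrow> real) \<Rightarrow> 'x measure \<Rightarrow> ('p \<Rightarrow> 'x \<Rightarrow> real) \<Rightarrow> 'p \<Rightarrow> 'p \<Rightarrow> 'x \<Rightarrow> real" where
  "hfun \<phi> \<mu> p \<theta> \<alpha> x =
     (\<integral>y. deriv \<phi> (dratio p \<theta> \<alpha> y) \<partial>(model \<mu> p \<theta>))
     - (dratio p \<theta> \<alpha> x * deriv \<phi> (dratio p \<theta> \<alpha> x) - \<phi> (dratio p \<theta> \<alpha> x))"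

definition grad_h :: "(real \<Rightarrow> real) \<Rightarrow> 'x measure \<Rightarrow> (real^'d \<Rightarrow> 'x \<Rightarrow> real) \<Rightarrow> real^'d \<Rightarrow> real^'d \<Rightarrow> 'x \<Rightarrow> real^'d" where
  "grad_h \<phi> \<mu> p \<theta> \<alpha> x =
     (\<chi> i. frechet_derivative (\<lambda>a. hfun \<phi> \<mu> p \<theta> a x) (at \<alpha>) (axis i 1))"

definition hess_h :: "(real \<Rightarrow> real) \<Rightarrow> 'x measure \<Rightarrow> (real^'d \<Rightarrow> 'x \<Rightarrow> real) \<Rightarrow> real^'d \<Rightarrow> real^'d \<Rightarrow> 'x \<Rightarrow> real^'d^'d" where
  "hess_h \<phi> \<mu> p \<theta> \<alpha> x =
     (\<chi> i j. frechet_derivative (\<lambda>a. grad_h \<phi> \<mu> p \<theta> a x) (at \<alpha>) (axis j 1) $ i)"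

text \<open>Bootstrap empirical measure \<open>P_n^* f = n^{-1} \<Sum> W_{ni} f(X_i)\<close> (0-based indices).\<close>
definition boot_emp :: "(nat \<Rightarrow> nat \<Rightarrow> 'w \<Rightarrow> real) \<Rightarrow> nat \<Rightarrow> (nat \<Rightarrow> 'x) \<Rightarrow> 'w \<Rightarrow> ('x \<Rightarrow> real) \<Rightarrow> real" where
  "boot_emp W n x w f = (1 / real n) * (\<Sum>i<n. W n i w * f (x i))"

definition exchangeable_weights :: "'w measure \<Rightarrow> (nat \<Rightarrow> nat \<Rightarrow> 'w \<Rightarrow> real) \<Rightarrow> bool" where
  "exchangeable_weights PW W \<longleftrightarrow> (\<forall>n \<pi>. \<pi> permutes {..<n} \<longrightarrow>
     distr PW (PiM {..<n} (\<lambda>_. borel)) (\<lambda>w. \<lambda>i\<in>{..<n}. W n (\<pi> i) w)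
     = distr PW (PiM {..<n} (\<lambda>_. borel)) (\<lambda>w. \<lambda>i\<in>{..<n}. W n i w))"

definition weights_W2 :: "'w measure \<Rightarrow> (nat \<Rightarrow> nat \<Rightarrow> 'w \<Rightarrow> real) \<Rightarrow> bool" where
  "weights_W2 PW W \<longleftrightarrow> (\<forall>n. \<forall>w\<in>space PW.
     (\<forall>i<n. W n i w \<ge> 0) \<and> (\<Sum>i<n. W n i w) = real n)"

definition weights_W3 :: "'w measure \<Rightarrow> (nat \<Rightarrow> nat \<Rightarrow> 'w \<Rightarrow> real) \<Rightarrow> bool" where
  "weights_W3 PW W \<longleftrightarrow>
     limsup (\<lambda>n. \<integral>\<^sup>+ u\<in>{0..}. ennreal (sqrt (measure PW {w\<in>space PW. W n 0 w \<ge> u})) \<partial>lborel) < \<infinity>"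

definition weights_W4 :: "'w measure \<Rightarrow> (nat \<Rightarrow> nat \<Rightarrow> 'w \<Rightarrow> real) \<Rightarrow> bool" where
  "weights_W4 PW W \<longleftrightarrow>
     ((\<lambda>l. limsup (\<lambda>n. SUP t\<in>{l..}. ereal (t\<^sup>2 * measure PW {w\<in>space PW. W n 0 w > t})))
        \<longlongrightarrow> 0) at_top"

definition weights_W5 :: "'w measure \<Rightarrow> (nat \<Rightarrow> nat \<Rightarrow> 'w \<Rightarrow> real) \<Rightarrow> bool" where
  "weights_W5 PW W \<longleftrightarrow> (\<exists>c>0. \<forall>e>0.
     (\<lambda>n. measure PW {w\<in>space PW. \<bar>(1 / real n) * (\<Sum>i<n. (W n i w - 1)\<^sup>2) - c\<^sup>2\<bar> > e})
       \<longlonglongrightarrow> 0)"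

end

theory Submission
  imports Defs
begin

text \<open>Consistency of an argmax estimator only needs two facts: the limit criterion
  \<open>\<alpha> \<mapsto> P\<^sub>\<theta>\<^sub>0 h(\<theta>,\<alpha>)\<close> has a well-separated maximum at \<open>\<theta>\<^sub>0\<close> (A.1), and the bootstrap criterion
  is uniformly close to it (A.2). If the gap of the maximum outside the \<open>\<epsilon>\<close>-ball is \<open>d\<close>, then on
  the event that the uniform deviation is at most \<open>d/2\<close> the maximiser lies in the ball. The
  statement conditional on the data follows by a Markov inequality for outer probabilities on
  the product space \<open>P\<^sub>X \<times> P\<^sub>W\<close>.\<close>

lemma outer_prob_le:
  assumes "B \<in> sets M" "A \<inter> space M \<subseteq> B"
  shows "outer_prob M A \<le> measure M B"
  unfolding outer_prob_def
  by (rule cInf_lower) (use assms in \<open>auto intro: bdd_belowI[where m=0]\<close>)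

lemma outer_prob_ge:
  assumes "\<And>B. B \<in> sets M \<Longrightarrow> A \<inter> space M \<subseteq> B \<Longrightarrow> c \<le> measure M B"
  shows "c \<le> outer_prob M A"
  unfolding outer_prob_def
  by (rule cInf_greatest) (auto intro: assms)

lemma outer_prob_nonneg: "0 \<le> outer_prob M A"
  by (rule outer_prob_ge) simp

lemma outer_prob_mono:
  assumes "A \<subseteq> A'"
  shows "outer_prob M A \<le> outer_prob M A'"
  by (rule outer_prob_ge, rule outer_prob_le) (use assms in auto)

text \<open>Any measurable cover \<open>C\<close> of \<open>A\<close> has measurable sections covering the sections of \<open>A\<close>,
  so Markov's inequality for \<open>x \<mapsto> N(C\<^sub>x)\<close> and Tonelli give the bound.\<close>

lemma outer_prob_pair_markov:
  assumes M: "prob_space M" and N: "prob_space N"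
    and A: "A \<subseteq> space (M \<Otimes>\<^sub>M N)" and eta: "\<eta> > 0"
  shows "outer_prob M {x\<in>space M. \<eta> < outer_prob N {w\<in>space N. (x,w)\<in>A}} * \<eta>
         \<le> outer_prob (M \<Otimes>\<^sub>M N) A"
proof -
  interpret M: prob_space M by (rule M)
  interpret N: prob_space N by (rule N)
  interpret MN: pair_prob_space M N by unfold_locales
  let ?S = "{x\<in>space M. \<eta> < outer_prob N {w\<in>space N. (x,w)\<in>A}}"
  show ?thesis
  proof (rule outer_prob_ge)
    fix C assume C: "C \<in> sets (M \<Otimes>\<^sub>M N)" "A \<inter> space (M \<Otimes>\<^sub>M N) \<subseteq> C"
    define D where "D = {x\<in>space M. ennreal \<eta> < emeasure N (Pair x -` C)}"
    have "(\<lambda>x. emeasure N (Pair x -` C)) \<in> borel_measurable M"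
      by (rule N.measurable_emeasure_Pair[OF C(1)])
    then have D_sets: "D \<in> sets M" unfolding D_def by measurable
    have S_sub_D: "?S \<subseteq> D"
    proof
      fix x assume x: "x \<in> ?S"
      have Cx: "Pair x -` C \<in> sets N" using C(1) x by (auto intro: sets_Pair1)
      have "{w\<in>space N. (x,w)\<in>A} \<inter> space N \<subseteq> Pair x -` C" using C(2) A x by auto
      then have "outer_prob N {w\<in>space N. (x,w)\<in>A} \<le> measure N (Pair x -` C)"
        by (rule outer_prob_le[OF Cx])
      with x have "\<eta> < measure N (Pair x -` C)" by auto
      then show "x \<in> D"
        using x eta by (simp add: D_def N.emeasure_eq_measure ennreal_less_iff)
    qed
    have "ennreal \<eta> * emeasure M D = (\<integral>\<^sup>+ x. ennreal \<eta> * indicator D x \<partial>M)"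
      using D_sets by (simp add: nn_integral_cmult_indicator)
    also have "\<dots> \<le> (\<integral>\<^sup>+ x. emeasure N (Pair x -` C) \<partial>M)"
      by (intro nn_integral_mono) (auto simp: D_def indicator_def less_imp_le)
    also have "\<dots> = emeasure (M \<Otimes>\<^sub>M N) C"
      by (rule N.emeasure_pair_measure_alt[OF C(1), symmetric])
    finally have "\<eta> * measure M D \<le> measure (M \<Otimes>\<^sub>M N) C"
      using eta by (simp add: M.emeasure_eq_measure MN.emeasure_eq_measure ennreal_mult
          flip: ennreal_le_iff)
    moreover have "outer_prob M ?S \<le> measure M D"
      using S_sub_D by (intro outer_prob_le[OF D_sets]) auto
    ultimately show "outer_prob M ?S * \<eta> \<le> measure (M \<Otimes>\<^sub>M N) C"
      using eta by (smt (verit) mult_right_mono mult.commute)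
  qed
qed

lemma outer_prob_sections_tendsto_zero:
  assumes M: "prob_space M" and N: "prob_space N" and eta: "\<eta> > 0"
    and B_sub: "\<And>n. B n \<subseteq> space (M \<Otimes>\<^sub>M N)"
    and B_lim: "(\<lambda>n. outer_prob (M \<Otimes>\<^sub>M N) (B n)) \<longlonglongrightarrow> 0"
    and E_in_B: "eventually (\<lambda>n. \<forall>x\<in>space M. \<forall>w\<in>space N. E n x w \<longrightarrow> (x, w) \<in> B n) sequentially"
  shows "(\<lambda>n. outer_prob M {x\<in>space M. \<eta> < outer_prob N {w\<in>space N. E n x w}}) \<longlonglongrightarrow> 0"
proof (rule tendsto_sandwich[OF _ _ tendsto_const])
  show "\<forall>\<^sub>F n in sequentially. 0 \<le> outer_prob M {x\<in>space M. \<eta> < outer_prob N {w\<in>space N. E n x w}}"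
    by (simp add: outer_prob_nonneg)
  show "(\<lambda>n. outer_prob (M \<Otimes>\<^sub>M N) (B n) / \<eta>) \<longlonglongrightarrow> 0"
    using tendsto_divide_zero[OF B_lim] by simp
  show "\<forall>\<^sub>F n in sequentially.
          outer_prob M {x\<in>space M. \<eta> < outer_prob N {w\<in>space N. E n x w}}
          \<le> outer_prob (M \<Otimes>\<^sub>M N) (B n) / \<eta>"
    using E_in_B
  proof eventually_elim
    case (elim n)
    have "outer_prob M {x\<in>space M. \<eta> < outer_prob N {w\<in>space N. E n x w}}
          \<le> outer_prob M {x\<in>space M. \<eta> < outer_prob N {w\<in>space N. (x, w) \<in> B n}}"
    proof (rule outer_prob_mono, safe)
      fix x assume x: "x \<in> space M" and "\<eta> < outer_prob N {w\<in>space N. E n x w}"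
      moreover have "outer_prob N {w\<in>space N. E n x w} \<le> outer_prob N {w\<in>space N. (x, w) \<in> B n}"
        using elim x by (intro outer_prob_mono) auto
      ultimately show "\<eta> < outer_prob N {w\<in>space N. (x, w) \<in> B n}" by simp
    qed
    also have "\<dots> \<le> outer_prob (M \<Otimes>\<^sub>M N) (B n) / \<eta>"
      using outer_prob_pair_markov[OF M N B_sub eta] eta by (simp add: pos_le_divide_eq)
    finally show ?case .
  qed
qed

lemma well_separated_maximum_gap:
  fixes \<Theta> :: "'a::metric_space set" and M :: "'a \<Rightarrow> real"
  assumes sep: "(SUP \<alpha>\<in>\<Theta> - ball \<theta>0 \<epsilon>. ereal (M \<alpha>)) < ereal (M \<theta>0)"
  obtains d where "d > 0" "\<And>\<alpha>. \<alpha> \<in> \<Theta> \<Longrightarrow> \<epsilon> < dist \<theta>0 \<alpha> \<Longrightarrow> M \<alpha> + d < M \<theta>0"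
proof -
  obtain c where c_sup: "(SUP \<alpha>\<in>\<Theta> - ball \<theta>0 \<epsilon>. ereal (M \<alpha>)) < ereal c" and c: "c < M \<theta>0"
    using ereal_dense2[OF sep] by fastforce
  have "M \<alpha> < c" if "\<alpha> \<in> \<Theta>" "\<epsilon> < dist \<theta>0 \<alpha>" for \<alpha>
  proof -
    from that have "ereal (M \<alpha>) \<le> (SUP \<alpha>\<in>\<Theta> - ball \<theta>0 \<epsilon>. ereal (M \<alpha>))"
      by (intro SUP_upper) auto
    then have "ereal (M \<alpha>) < ereal c" using c_sup by (rule le_less_trans)
    then show ?thesis by simp
  qed
  with c show ?thesis by (intro that[of "M \<theta>0 - c"]) auto
qed

lemma argmax_within_separation_radius:
  fixes M Mn :: "'a::metric_space \<Rightarrow> real"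
  assumes gap: "\<And>\<alpha>. \<alpha> \<in> \<Theta> \<Longrightarrow> \<epsilon> < dist \<theta>0 \<alpha> \<Longrightarrow> M \<alpha> + d < M \<theta>0"
    and dev: "\<And>\<alpha>. \<alpha> \<in> \<Theta> \<Longrightarrow> \<bar>Mn \<alpha> - M \<alpha>\<bar> \<le> d / 2"
    and "\<theta>0 \<in> \<Theta>" "a \<in> \<Theta>" "Mn \<theta>0 \<le> Mn a"
  shows "dist \<theta>0 a \<le> \<epsilon>"
proof (rule ccontr)
  assume "\<not> dist \<theta>0 a \<le> \<epsilon>"
  with gap \<open>a \<in> \<Theta>\<close> have "M a + d < M \<theta>0" by simp
  with dev[OF \<open>a \<in> \<Theta>\<close>] dev[OF \<open>\<theta>0 \<in> \<Theta>\<close>] \<open>Mn \<theta>0 \<le> Mn a\<close> show False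
    unfolding abs_le_iff by linarith
qed

theorem theorem3p1:
  fixes \<mu> :: "'x measure"
    and p :: "real^'d \<Rightarrow> 'x \<Rightarrow> real"
    and \<Theta> :: "(real^'d) set"
    and \<theta>0 \<theta> :: "real^'d"
    and \<phi> :: "real \<Rightarrow> real"
    and PW :: "'w measure"
    and W :: "nat \<Rightarrow> nat \<Rightarrow> 'w \<Rightarrow> real"
    and \<delta> :: "nat \<Rightarrow> real"
    and alphahat :: "nat \<Rightarrow> (nat \<Rightarrow> 'x) \<Rightarrow> 'w \<Rightarrow> real^'d"
  defines "P \<equiv> model \<mu> p"
    and "h \<equiv> hfun \<phi> \<mu> p \<theta>"
    and "PX \<equiv> PiM UNIV (\<lambda>_. model \<mu> p \<theta>0)"
  assumes compact: "compact \<Theta>"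
    and theta0_in: "\<theta>0 \<in> \<Theta>"
    and theta_in: "\<theta> \<in> \<Theta>"
    and dens_meas: "\<And>\<alpha>. \<alpha> \<in> \<Theta> \<Longrightarrow> p \<alpha> \<in> borel_measurable \<mu>"
    and dens_nonneg: "\<And>\<alpha> x. \<alpha> \<in> \<Theta> \<Longrightarrow> x \<in> space \<mu> \<Longrightarrow> p \<alpha> x \<ge> 0"
    and model_prob: "\<And>\<alpha>. \<alpha> \<in> \<Theta> \<Longrightarrow> prob_space (P \<alpha>)"
    and identifiable: "inj_on P \<Theta>"
    and phi_strict_convex: "strict_convex_on {0<..} \<phi>"
    and phi_C2: "C2_on {0<..} \<phi>"
    and phi_integrable: "\<And>\<alpha>. \<alpha> \<in> \<Theta> \<Longrightarrow> integrable (P \<theta>) (\<lambda>x. deriv \<phi> (dratio p \<theta> \<alpha> x))"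
    and PW_prob: "prob_space PW"
    and W_meas: "\<And>n i. W n i \<in> borel_measurable PW"
    and W1: "exchangeable_weights PW W"
    and W2: "weights_W2 PW W"
    and W3: "weights_W3 PW W"
    and W4: "weights_W4 PW W"
    and W5: "weights_W5 PW W"
    and delta_pos: "\<And>n. \<delta> n > 0"
    and alphahat_in: "\<And>n x w. x \<in> space PX \<Longrightarrow> w \<in> space PW \<Longrightarrow> alphahat n x w \<in> \<Theta>"
    and alphahat_argsup: "\<And>n x w \<alpha>. n > 0 \<Longrightarrow> x \<in> space PX \<Longrightarrow> w \<in> space PW \<Longrightarrow> \<alpha> \<in> \<Theta> \<Longrightarrow>
          boot_emp W n x w (h \<alpha>) \<le> boot_emp W n x w (h (alphahat n x w))"
    and A1: "\<And>N. openin (top_of_set \<Theta>) N \<Longrightarrow> \<theta>0 \<in> N \<Longrightarrow>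
          (SUP \<alpha>\<in>\<Theta> - N. ereal (integral\<^sup>L (P \<theta>0) (h \<alpha>))) < ereal (integral\<^sup>L (P \<theta>0) (h \<theta>0))"
    and A2: "\<And>e. e > 0 \<Longrightarrow>
          (\<lambda>n. outer_prob (PX \<Otimes>\<^sub>M PW)
             {(x, w) \<in> space (PX \<Otimes>\<^sub>M PW).
                (SUP \<alpha>\<in>\<Theta>. ereal \<bar>boot_emp W n x w (h \<alpha>) - integral\<^sup>L (P \<theta>0) (h \<alpha>)\<bar>) > ereal e})
          \<longlonglongrightarrow> 0"
    and diff: "\<And>n \<alpha> x. \<alpha> \<in> \<Theta> \<Longrightarrow> norm (\<alpha> - \<theta>0) \<le> \<delta> n \<Longrightarrow> x \<in> space \<mu> \<Longrightarrow>
          (\<lambda>a. h a x) differentiable (at \<alpha>) \<and>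
          (\<lambda>a. grad_h \<phi> \<mu> p \<theta> a x) differentiable (at \<alpha>)"
    and A3: "invertible (\<chi> i j. \<integral>x. grad_h \<phi> \<mu> p \<theta> \<theta>0 x $ i * grad_h \<phi> \<mu> p \<theta> \<theta>0 x $ j \<partial>(P \<theta>0))"
            "invertible (\<chi> i j. - (\<integral>x. hess_h \<phi> \<mu> p \<theta> \<theta>0 x $ i $ j \<partial>(P \<theta>0)))"
    and A4: "\<And>n. P_measurable_class (P \<theta>0)
                  {(\<lambda>x. grad_h \<phi> \<mu> p \<theta> \<alpha> x $ i) | \<alpha> i. \<alpha> \<in> \<Theta> \<and> norm (\<alpha> - \<theta>0) \<le> \<delta> n}
            \<and> L2_class (P \<theta>0)
                  {(\<lambda>x. grad_h \<phi> \<mu> p \<theta> \<alpha> x $ i) | \<alpha> i. \<alpha> \<in> \<Theta> \<and> norm (\<alpha> - \<theta>0) \<le> \<delta> n}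
            \<and> Donsker (P \<theta>0)
                  {(\<lambda>x. grad_h \<phi> \<mu> p \<theta> \<alpha> x $ i) | \<alpha> i. \<alpha> \<in> \<Theta> \<and> norm (\<alpha> - \<theta>0) \<le> \<delta> n}"
    and A5: "\<And>n. P_measurable_class (P \<theta>0)
                  {(\<lambda>x. hess_h \<phi> \<mu> p \<theta> \<alpha> x $ i $ j) | \<alpha> i j. \<alpha> \<in> \<Theta> \<and> norm (\<alpha> - \<theta>0) \<le> \<delta> n}
            \<and> L2_class (P \<theta>0)
                  {(\<lambda>x. hess_h \<phi> \<mu> p \<theta> \<alpha> x $ i $ j) | \<alpha> i j. \<alpha> \<in> \<Theta> \<and> norm (\<alpha> - \<theta>0) \<le> \<delta> n}
            \<and> Donsker (P \<theta>0)
                  {(\<lambda>x. hess_h \<phi> \<mu> p \<theta> \<alpha> x $ i $ j) | \<alpha> i j. \<alpha> \<in> \<Theta> \<and> norm (\<alpha> - \<theta>0) \<le> \<delta> n}"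
  shows "\<And>\<epsilon> \<eta>. \<epsilon> > 0 \<Longrightarrow> \<eta> > 0 \<Longrightarrow>
    (\<lambda>n. outer_prob PX
        {x \<in> space PX. outer_prob PW {w \<in> space PW. norm (alphahat n x w - \<theta>0) > \<epsilon>} > \<eta>})
    \<longlonglongrightarrow> 0"
proof -
  fix \<epsilon> \<eta> :: real
  assume \<epsilon>: "\<epsilon> > 0" and \<eta>: "\<eta> > 0"
  define M where "M \<alpha> = integral\<^sup>L (P \<theta>0) (h \<alpha>)" for \<alpha>
  have "openin (top_of_set \<Theta>) (\<Theta> \<inter> ball \<theta>0 \<epsilon>)"
    by (simp add: Int_commute openin_open_Int)
  from A1[OF this] theta0_in \<epsilon> have "(SUP \<alpha>\<in>\<Theta> - ball \<theta>0 \<epsilon>. ereal (M \<alpha>)) < ereal (M \<theta>0)"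
    by (simp add: M_def Diff_Int)
  then obtain d where d: "d > 0"
    and gap: "\<And>\<alpha>. \<alpha> \<in> \<Theta> \<Longrightarrow> \<epsilon> < dist \<theta>0 \<alpha> \<Longrightarrow> M \<alpha> + d < M \<theta>0"
    by (rule well_separated_maximum_gap) blast
  define B where "B n = {(x, w) \<in> space (PX \<Otimes>\<^sub>M PW).
      (SUP \<alpha>\<in>\<Theta>. ereal \<bar>boot_emp W n x w (h \<alpha>) - integral\<^sup>L (P \<theta>0) (h \<alpha>)\<bar>) > ereal (d / 2)}" for n
  have far_in_B: "(x, w) \<in> B n"
    if "n > 0" "x \<in> space PX" "w \<in> space PW" "\<epsilon> < norm (alphahat n x w - \<theta>0)" for n x w
  proof (rule ccontr)
    assume "(x, w) \<notin> B n"
    with that have "\<bar>boot_emp W n x w (h \<alpha>) - M \<alpha>\<bar> \<le> d / 2" if "\<alpha> \<in> \<Theta>" for \<alpha>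
      using \<open>\<alpha> \<in> \<Theta>\<close> by (auto simp: B_def M_def space_pair_measure not_less SUP_le_iff)
    from argmax_within_separation_radius[OF gap this theta0_in alphahat_in alphahat_argsup]
    have "dist \<theta>0 (alphahat n x w) \<le> \<epsilon>"
      using that theta0_in by blast
    with that(4) show False by (simp add: dist_norm norm_minus_commute)
  qed
  have "prob_space PX"
    unfolding PX_def using model_prob[OF theta0_in] by (simp add: P_def prob_space_PiM)
  moreover have "\<forall>\<^sub>F n in sequentially. \<forall>x\<in>space PX. \<forall>w\<in>space PW.
      \<epsilon> < norm (alphahat n x w - \<theta>0) \<longrightarrow> (x, w) \<in> B n"
    using eventually_gt_at_top[of 0] by eventually_elim (blast intro: far_in_B)
  ultimately show "(\<lambda>n. outer_prob PX
        {x \<in> space PX. outer_prob PW {w \<in> space PW. norm (alphahat n x w - \<theta>0) > \<epsilon>} > \<eta>})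
    \<longlonglongrightarrow> 0"
    using PW_prob \<eta> A2[of "d / 2"] d
    by (intro outer_prob_sections_tendsto_zero[where B = B]) (auto simp: B_def)
qed

end
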